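(* Let $n\geq1$ and $0\leq p\leq 1$. Then: (i) for $1<k<n$, $$\Pr_p(PCE_k)=\sum_{r=k}^n\binom{r}{k}(-1)^{r-k}\binom{n}{r}2^r\bigl(p^{2^n-2^{n-r}}-p^{2^n}\bigr),\quad \Pr_p(NCE_k)=\sum_{r=k}^n\binom{r}{k}(-1)^{r-k}\binom{n}{r}2^r\bigl((1-p)^{2^n-2^{n-r}}-(1-p)^{2^n}\bigr);$$ (ii) if $n>1$, $$\Pr_p(PCE_n)=2^n\bigl(p^{2^n-1}-p^{2^n}\bigr)+p^{2^n},\qquad \Pr_p(NCE_n)=2^n\bigl((1-p)^{2^n-1}-(1-p)^{2^n}\bigr)+(1-p)^{2^n};$$ (iii) if $1<n$, $$\Pr_p(PCE_1)=2n\bigl(p^{2^{n-1}}-p^{2^n}-p^{2^{n-1}}(1-p)^{2^{n-1}}\bigr)+\sum_{r=2}^n r(-1)^{r-1}\binom{n}{r}2^r\bigl(p^{2^n-2^{n-r}}-p^{2^n}\bigr),$$ $$\Pr_p(NCE_1)=2n\bigl((1-p)^{2^{n-1}}-(1-p)^{2^n}-p^{2^{n-1}}(1-p)^{2^{n-1}}\bigr)+\sum_{r=2}^n r(-1)^{r-1}\binom{n}{r}2^r\bigl((1-p)^{2^n-2^{n-r}}-(1-p)^{2^n}\bigr).$$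
   Context: Boolean functions on $n$ variables are maps $f:\{0,1\}^n\to\{0,1\}$, variables indexed by $[n]=\{0,\dots,n-1\}$. The bias-$p$ probability measure on Boolean functions is $\Pr_p(f)=p^{|f^{-1}\{1\}|}(1-p)^{|f^{-1}\{0\}|}$ (with $0^0=1$). $f$ is positively canalizing for variable $i$ if there is $s\in\{0,1\}$ with $f(x)=1$ for all $x$ with $x_i=s$; negatively canalizing for variable $i$ if there is $s\in\{0,1\}$ with $f(x)=0$ for all $x$ with $x_i=s$. $f$ is positively (resp. negatively) canalizing if it is so for some variable. $PCE_k$ is the set of Boolean functions that are positively but not negatively canalizing and are positively canalizing for exactly $k$ variables; $NCE_k$ is the set of Boolean functions that are negatively but not positively canalizing and are negatively canalizing for exactly $k$ variables. *)

theory Defs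
  imports Complex_Main
begin

text \<open>Inputs in {0,1}^n are bool lists of length n (variable i is the i-th entry);
 a Boolean function on n variables is a map on bool lists that is False outside the cube
 (extensional convention), so that these functions correspond bijectively to maps
 {0,1}^n -> {0,1}.\<close>

definition cube :: "nat \<Rightarrow> bool list set" where
  "cube n = {x. length x = n}"

definition boolfuns :: "nat \<Rightarrow> (bool list \<Rightarrow> bool) set" where
  "boolfuns n = {f. \<forall>x. x \<notin> cube n \<longrightarrow> f x = False}"

definition Prb :: "real \<Rightarrow> nat \<Rightarrow> (bool list \<Rightarrow> bool) set \<Rightarrow> real" where
  "Prb p n S = (\<Sum>f\<in>S. p ^ card {x\<in>cube n. f x} * (1 - p) ^ card {x\<in>cube n. \<not> f x})"

definition pos_canal_var :: "nat \<Rightarrow> (bool list \<Rightarrow> bool) \<Rightarrow> nat \<Rightarrow> bool" where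
  "pos_canal_var n f i = (\<exists>s. \<forall>x\<in>cube n. x ! i = s \<longrightarrow> f x)"

definition neg_canal_var :: "nat \<Rightarrow> (bool list \<Rightarrow> bool) \<Rightarrow> nat \<Rightarrow> bool" where
  "neg_canal_var n f i = (\<exists>s. \<forall>x\<in>cube n. x ! i = s \<longrightarrow> \<not> f x)"

definition pos_canal :: "nat \<Rightarrow> (bool list \<Rightarrow> bool) \<Rightarrow> bool" where
  "pos_canal n f = (\<exists>i<n. pos_canal_var n f i)"

definition neg_canal :: "nat \<Rightarrow> (bool list \<Rightarrow> bool) \<Rightarrow> bool" where
  "neg_canal n f = (\<exists>i<n. neg_canal_var n f i)"

definition PCE :: "nat \<Rightarrow> nat \<Rightarrow> (bool list \<Rightarrow> bool) set" where
  "PCE n k = {f \<in> boolfuns n. pos_canal n f \<and> \<not> neg_canal n f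
                 \<and> card {i. i < n \<and> pos_canal_var n f i} = k}"

definition NCE :: "nat \<Rightarrow> nat \<Rightarrow> (bool list \<Rightarrow> bool) set" where
  "NCE n k = {f \<in> boolfuns n. neg_canal n f \<and> \<not> pos_canal n f
                 \<and> card {i. i < n \<and> neg_canal_var n f i} = k}"

end

theory Submission
  imports Defs
begin

(* Let K(f) be the set of variables in which f is positively canalizing. For a set S of r
   variables, f is positively canalizing in every variable of S iff f is the constant 1 or the
   zeros of f lie in one of the 2^r subcubes obtained by fixing the coordinates in S; for
   non-constant f that subcube is unique, and each of these events has probability
   p^(2^n - 2^(n-r)) - p^(2^n). Inclusion-exclusion in the form
   sum over S <= K of C(|S|,k) (-1)^(|S|-k) = [|K| = k] then yields Pr(|K(f)| = k).
   The functions that are both positively and negatively canalizing are the 2n literals,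
   each canalizing in exactly one variable: they are removed from the count for k = 1 and do
   not occur for k >= 2, while the constant 1 contributes the extra p^(2^n) for k = n.
   Complementing f exchanges positive and negative canalization, and p with 1 - p. *)

lemma sum_Pow_by_card:
  fixes g :: "nat \<Rightarrow> 'a::comm_semiring_1"
  assumes "finite K"
  shows "(\<Sum>S\<in>Pow K. g (card S)) = (\<Sum>r\<le>card K. of_nat (card K choose r) * g r)"
proof -
  have "(\<Sum>S\<in>Pow K. g (card S)) = (\<Sum>r\<le>card K. \<Sum>S | S \<in> Pow K \<and> card S = r. g (card S))"
    using assms by (intro sum.group[symmetric]) (auto intro: card_mono)
  also have "\<dots> = (\<Sum>r\<le>card K. of_nat (card K choose r) * g r)"
  proof (rule sum.cong[OF refl])
    fix r
    have "(\<Sum>S | S \<in> Pow K \<and> card S = r. g (card S)) = (\<Sum>S | S \<subseteq> K \<and> card S = r. g r)"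
      by (rule sum.cong) auto
    then show "(\<Sum>S | S \<in> Pow K \<and> card S = r. g (card S)) = of_nat (card K choose r) * g r"
      by (simp add: n_subsets[OF assms])
  qed
  finally show ?thesis .
qed

lemma sum_choose_choose_alternating:
  "(\<Sum>r\<le>m. of_nat (m choose r) * of_nat (r choose k) * (-1) ^ (r - k) :: 'a::comm_ring_1)
     = (if m = k then 1 else 0)"
proof (cases "k \<le> m")
  case False
  then show ?thesis by (auto intro!: sum.neutral simp: binomial_eq_0)
next
  case True
  have "(\<Sum>r\<le>m. of_nat (m choose r) * of_nat (r choose k) * (-1) ^ (r - k) :: 'a)
      = (\<Sum>r=k..m. of_nat (m choose k) * (of_nat ((m - k) choose (r - k)) * (-1) ^ (r - k)))"
  proof (rule sum.mono_neutral_cong_right)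
    fix r assume "r \<in> {k..m}"
    then have "(m choose r) * (r choose k) = (m choose k) * ((m - k) choose (r - k))"
      by (intro choose_mult) auto
    then show "of_nat (m choose r) * of_nat (r choose k) * (-1) ^ (r - k)
        = (of_nat (m choose k) * (of_nat ((m - k) choose (r - k)) * (-1) ^ (r - k)) :: 'a)"
      by (metis mult.assoc of_nat_mult)
  qed (auto simp: binomial_eq_0)
  also have "\<dots> = of_nat (m choose k) * (\<Sum>j\<le>m - k. (-1) ^ j * of_nat ((m - k) choose j))"
    by (simp add: sum_distrib_left mult.commute sum.atLeastAtMost_shift_0[OF True] atLeast0AtMost)
  also have "\<dots> = (if m = k then 1 else 0)"
    using True choose_alternating_sum[of "m - k", where 'a='a] by auto
  finally show ?thesis .
qed

lemma sum_Pow_choose_alternating: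
  assumes "finite K"
  shows "(\<Sum>S\<in>Pow K. of_nat (card S choose k) * (-1) ^ (card S - k) :: 'a::comm_ring_1)
     = (if card K = k then 1 else 0)"
  using sum_Pow_by_card[OF assms, of "\<lambda>r. of_nat (r choose k) * (-1) ^ (r - k) :: 'a"]
    sum_choose_choose_alternating[of "card K" k, where 'a='a]
  by (simp add: mult.assoc)

lemma sum_card_eq_inclusion_exclusion:
  fixes w :: "'a \<Rightarrow> 'b::comm_ring_1" and K :: "'a \<Rightarrow> 'c set"
  assumes "finite F" "finite I" "\<And>x. x \<in> F \<Longrightarrow> K x \<subseteq> I"
  shows "(\<Sum>x\<in>{x\<in>F. card (K x) = k}. w x)
       = (\<Sum>S\<in>Pow I. of_nat (card S choose k) * (-1) ^ (card S - k) * (\<Sum>x\<in>{x\<in>F. S \<subseteq> K x}. w x))"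
proof -
  define c :: "'c set \<Rightarrow> 'b" where "c S = of_nat (card S choose k) * (-1) ^ (card S - k)" for S
  have indicator: "(if card (K x) = k then 1 else 0) = (\<Sum>S\<in>Pow I. if S \<subseteq> K x then c S else 0)"
    if "x \<in> F" for x
  proof -
    have "{S \<in> Pow I. S \<subseteq> K x} = Pow (K x)"
      using assms(3)[OF that] by auto
    then have "(\<Sum>S\<in>Pow I. if S \<subseteq> K x then c S else 0) = sum c (Pow (K x))"
      using assms(2) by (simp add: sum.inter_filter[symmetric])
    also have "\<dots> = (if card (K x) = k then 1 else 0)"
      unfolding c_def using assms(2,3) that by (intro sum_Pow_choose_alternating) (auto intro: finite_subset)
    finally show ?thesis by simp
  qed
  have "(\<Sum>x\<in>{x\<in>F. card (K x) = k}. w x) = (\<Sum>x\<in>F. (if card (K x) = k then 1 else 0) * w x)"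
    using assms(1) by (simp add: sum.inter_filter if_distrib[of "\<lambda>y. y * _"] cong: if_cong)
  also have "\<dots> = (\<Sum>x\<in>F. \<Sum>S\<in>Pow I. if S \<subseteq> K x then c S * w x else 0)"
    by (intro sum.cong) (auto simp: indicator sum_distrib_right intro: sum.cong)
  also have "\<dots> = (\<Sum>S\<in>Pow I. \<Sum>x\<in>F. if S \<subseteq> K x then c S * w x else 0)"
    by (rule sum.swap)
  also have "\<dots> = (\<Sum>S\<in>Pow I. c S * (\<Sum>x\<in>{x\<in>F. S \<subseteq> K x}. w x))"
    using assms(1) by (simp add: sum.inter_filter sum_distrib_left if_distrib[of "\<lambda>y. _ * y"] cong: if_cong)
  finally show ?thesis by (simp add: c_def)
qed

definition bernoulli_weight :: "'a::comm_ring_1 \<Rightarrow> 'b set \<Rightarrow> 'b set \<Rightarrow> 'a" where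
  "bernoulli_weight p U A = p ^ card A * (1 - p) ^ card (U - A)"

lemma sum_bernoulli_weight_Pow:
  assumes "finite U"
  shows "(\<Sum>A\<in>Pow U. bernoulli_weight p U A) = 1"
proof -
  have "(\<Sum>A\<in>Pow U. bernoulli_weight p U A) = (\<Sum>A\<in>Pow U. p ^ card A * (1 - p) ^ (card U - card A))"
    using assms by (intro sum.cong) (auto simp: bernoulli_weight_def card_Diff_subset finite_subset)
  also have "\<dots> = (\<Sum>r\<le>card U. of_nat (card U choose r) * p ^ r * (1 - p) ^ (card U - r))"
    using sum_Pow_by_card[OF assms, of "\<lambda>r. p ^ r * (1 - p) ^ (card U - r)"] by (simp add: mult.assoc)
  also have "\<dots> = (p + (1 - p)) ^ card U"
    by (rule binomial_ring[symmetric])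
  finally show ?thesis by simp
qed

lemma sum_bernoulli_weight_supersets:
  assumes "finite U" "T \<subseteq> U"
  shows "(\<Sum>A\<in>{A. T \<subseteq> A \<and> A \<subseteq> U}. bernoulli_weight p U A) = p ^ card T"
proof -
  have "(\<Sum>A\<in>{A. T \<subseteq> A \<and> A \<subseteq> U}. bernoulli_weight p U A)
      = (\<Sum>B\<in>Pow (U - T). bernoulli_weight p U (T \<union> B))"
    by (rule sum.reindex_bij_witness[where j="\<lambda>A. A - T" and i="\<lambda>B. T \<union> B"]) (use assms in \<open>auto simp: Un_absorb1\<close>)
  also have "\<dots> = (\<Sum>B\<in>Pow (U - T). p ^ card T * bernoulli_weight p (U - T) B)"
  proof (rule sum.cong[OF refl])
    fix B assume "B \<in> Pow (U - T)"
    moreover have "finite T" using assms finite_subset by blast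
    ultimately have "card (T \<union> B) = card T + card B" and "U - (T \<union> B) = (U - T) - B"
      using assms(1) by (auto intro: card_Un_disjoint finite_subset)
    then show "bernoulli_weight p U (T \<union> B) = p ^ card T * bernoulli_weight p (U - T) B"
      by (simp add: bernoulli_weight_def power_add mult.assoc)
  qed
  also have "\<dots> = p ^ card T"
    using assms(1) by (simp add: sum_distrib_left[symmetric] sum_bernoulli_weight_Pow)
  finally show ?thesis .
qed

lemma cube_eq_lists: "cube n = {xs. set xs \<subseteq> UNIV \<and> length xs = n}"
  by (simp add: cube_def)

lemma finite_cube: "finite (cube n)"
  unfolding cube_eq_lists by (rule finite_lists_length_eq) simp

lemma card_cube: "card (cube n) = 2 ^ n"
  using card_lists_length_eq[of "UNIV :: bool set" n] by (simp add: cube_eq_lists)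

definition subcube :: "nat \<Rightarrow> nat set \<Rightarrow> (nat \<Rightarrow> bool) \<Rightarrow> bool list set" where
  "subcube n S c = {x \<in> cube n. \<forall>i\<in>S. x ! i = c i}"

lemma subcube_eq_Un_flip:
  assumes "i < n" "i \<notin> S"
  shows "subcube n S c
    = subcube n (insert i S) c \<union> (\<lambda>x. x[i := \<not> x ! i]) ` subcube n (insert i S) c"
    (is "_ = ?C \<union> ?flip ` ?C")
proof (intro equalityI subsetI)
  fix x assume x: "x \<in> subcube n S c"
  show "x \<in> ?C \<union> ?flip ` ?C"
  proof (cases "x ! i = c i")
    case False
    then have "?flip x \<in> ?C"
      using x assms by (auto simp: subcube_def cube_def nth_list_update)
    then have "?flip (?flip x) \<in> ?flip ` ?C"
      by (rule imageI)
    moreover have "?flip (?flip x) = x"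
      using x assms by (simp add: subcube_def cube_def list_update_id)
    ultimately show ?thesis by (metis UnI2)
  qed (use x in \<open>auto simp: subcube_def\<close>)
next
  fix x assume "x \<in> ?C \<union> ?flip ` ?C"
  then consider "x \<in> ?C" | y where "y \<in> ?C" "x = ?flip y" by blast
  then show "x \<in> subcube n S c"
  proof cases
    case 2
    have "x ! j = c j" if "j \<in> S" for j
    proof -
      have "j \<noteq> i" using that assms(2) by blast
      then show ?thesis using 2 that by (simp add: subcube_def)
    qed
    then show ?thesis using 2 by (simp add: subcube_def cube_def)
  qed (auto simp: subcube_def)
qed

lemma card_subcube_insert:
  assumes "i < n" "i \<notin> S"
  shows "card (subcube n S c) = 2 * card (subcube n (insert i S) c)"
proof -
  let ?C = "subcube n (insert i S) c"
  let ?flip = "\<lambda>x :: bool list. x[i := \<not> x ! i]"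
  have "?C \<inter> ?flip ` ?C = {}"
  proof -
    have "x ! i = c i" and "?flip x ! i \<noteq> c i" if "x \<in> ?C" for x
      using that assms(1) by (simp_all add: subcube_def cube_def)
    then show ?thesis by auto
  qed
  moreover have "inj_on ?flip ?C"
  proof (rule inj_on_inverseI)
    fix x assume "x \<in> ?C"
    then have "i < length x" using assms(1) by (simp add: subcube_def cube_def)
    then show "?flip (?flip x) = x" by (simp add: list_update_id)
  qed
  moreover have "finite ?C"
    using finite_cube by (simp add: subcube_def)
  ultimately show ?thesis
    by (simp add: subcube_eq_Un_flip[OF assms] card_Un_disjoint card_image)
qed

lemma card_subcube:
  assumes "S \<subseteq> {..<n}"
  shows "card (subcube n S c) = 2 ^ (n - card S)"
proof -
  have "finite S" using assms finite_subset by blast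
  then show ?thesis using assms
  proof (induction S rule: finite_induct)
    case empty
    then show ?case by (simp add: subcube_def card_cube)
  next
    case (insert i S)
    then have "card S < n"
      by (metis card_insert_disjoint card_lessThan card_mono finite_lessThan less_eq_Suc_le)
    then have "(2::nat) ^ (n - card S) = 2 * 2 ^ (n - card (insert i S))"
      by (metis Suc_diff_Suc card_insert_disjoint insert.hyps power_Suc)
    then show ?case
      using insert card_subcube_insert[of i n S c] by simp
  qed
qed

lemma subcube_eq_if_mem:
  assumes "z \<in> subcube n S c"
  shows "subcube n S (\<lambda>i. z ! i) = subcube n S c"
  using assms by (auto simp: subcube_def)

lemma boolfuns_eq_image:
  "{f \<in> boolfuns n. P f} = (\<lambda>A x. x \<in> A) ` {A. A \<subseteq> cube n \<and> P (\<lambda>x. x \<in> A)}"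
proof (intro equalityI subsetI)
  fix f assume f: "f \<in> {f \<in> boolfuns n. P f}"
  then have ones: "(\<lambda>x. x \<in> {x \<in> cube n. f x}) = f"
    by (auto simp: boolfuns_def)
  have "{x \<in> cube n. f x} \<subseteq> cube n \<and> P (\<lambda>x. x \<in> {x \<in> cube n. f x})"
    unfolding ones using f by auto
  then show "f \<in> (\<lambda>A x. x \<in> A) ` {A. A \<subseteq> cube n \<and> P (\<lambda>x. x \<in> A)}"
    by (intro image_eqI[where f="\<lambda>A x. x \<in> A", OF ones[symmetric]]) blast
qed (auto simp: boolfuns_def)

lemma finite_boolfuns: "finite (boolfuns n)"
  using boolfuns_eq_image[of n "\<lambda>_. True"] finite_cube by simp

lemma Prb_eq_sum_bernoulli_weight:
  "Prb p n {f \<in> boolfuns n. P f}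
     = (\<Sum>A\<in>{A. A \<subseteq> cube n \<and> P (\<lambda>x. x \<in> A)}. bernoulli_weight p (cube n) A)"
proof -
  have "inj_on (\<lambda>A x. x \<in> A) X" for X :: "bool list set set"
    by (rule inj_onI) (simp add: fun_eq_iff set_eq_iff)
  then have "Prb p n {f \<in> boolfuns n. P f}
      = (\<Sum>A\<in>{A. A \<subseteq> cube n \<and> P (\<lambda>x. x \<in> A)}.
           p ^ card {x \<in> cube n. x \<in> A} * (1 - p) ^ card {x \<in> cube n. x \<notin> A})"
    by (simp add: Prb_def boolfuns_eq_image sum.reindex)
  also have "\<dots> = (\<Sum>A\<in>{A. A \<subseteq> cube n \<and> P (\<lambda>x. x \<in> A)}. bernoulli_weight p (cube n) A)"
  proof (rule sum.cong[OF refl])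
    fix A assume "A \<in> {A. A \<subseteq> cube n \<and> P (\<lambda>x. x \<in> A)}"
    then have "{x \<in> cube n. x \<in> A} = A" "{x \<in> cube n. x \<notin> A} = cube n - A"
      by auto
    then show "p ^ card {x \<in> cube n. x \<in> A} * (1 - p) ^ card {x \<in> cube n. x \<notin> A}
        = bernoulli_weight p (cube n) A"
      by (simp add: bernoulli_weight_def)
  qed
  finally show ?thesis .
qed

lemma pos_canal_on_iff_zeros_in_subcube:
  assumes "z \<in> cube n" "\<not> f z"
  shows "(\<forall>i\<in>S. pos_canal_var n f i) \<longleftrightarrow> {x \<in> cube n. \<not> f x} \<subseteq> subcube n S (\<lambda>i. z ! i)"
proof
  assume canal: "\<forall>i\<in>S. pos_canal_var n f i"
  show "{x \<in> cube n. \<not> f x} \<subseteq> subcube n S (\<lambda>i. z ! i)"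
  proof (clarsimp simp: subcube_def)
    fix x i assume "x \<in> cube n" "\<not> f x" "i \<in> S"
    with canal obtain s where "\<forall>y\<in>cube n. y ! i = s \<longrightarrow> f y"
      unfolding pos_canal_var_def by blast
    with assms \<open>x \<in> cube n\<close> \<open>\<not> f x\<close> show "x ! i = z ! i" by blast
  qed
next
  assume "{x \<in> cube n. \<not> f x} \<subseteq> subcube n S (\<lambda>i. z ! i)"
  then have "\<forall>x\<in>cube n. x ! i = (\<not> z ! i) \<longrightarrow> f x" if "i \<in> S" for i
    using that by (auto simp: subcube_def)
  then show "\<forall>i\<in>S. pos_canal_var n f i"
    unfolding pos_canal_var_def by blast
qed

lemma pos_canal_on_sets_eq_UN:
  "{A. A \<subseteq> cube n \<and> (\<forall>i\<in>S. pos_canal_var n (\<lambda>x. x \<in> A) i)} - {cube n}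
     = (\<Union>T\<in>Pow S. {A. cube n - subcube n S (\<lambda>i. i \<in> T) \<subseteq> A \<and> A \<subset> cube n})"
proof (intro equalityI subsetI)
  fix A assume A: "A \<in> {A. A \<subseteq> cube n \<and> (\<forall>i\<in>S. pos_canal_var n (\<lambda>x. x \<in> A) i)} - {cube n}"
  then obtain z where z: "z \<in> cube n" "z \<notin> A" by blast
  define T where "T = {i \<in> S. z ! i}"
  have "z \<in> subcube n S (\<lambda>i. i \<in> T)"
    using z by (simp add: subcube_def T_def)
  then have "subcube n S (\<lambda>i. z ! i) = subcube n S (\<lambda>i. i \<in> T)"
    by (rule subcube_eq_if_mem)
  moreover have "{x \<in> cube n. x \<notin> A} \<subseteq> subcube n S (\<lambda>i. z ! i)"
    using A z pos_canal_on_iff_zeros_in_subcube[of z n "\<lambda>x. x \<in> A" S] by auto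
  ultimately have "cube n - subcube n S (\<lambda>i. i \<in> T) \<subseteq> A"
    by auto
  moreover have "T \<in> Pow S"
    by (auto simp: T_def)
  ultimately show "A \<in> (\<Union>T\<in>Pow S. {A. cube n - subcube n S (\<lambda>i. i \<in> T) \<subseteq> A \<and> A \<subset> cube n})"
    using A by blast
next
  fix A assume "A \<in> (\<Union>T\<in>Pow S. {A. cube n - subcube n S (\<lambda>i. i \<in> T) \<subseteq> A \<and> A \<subset> cube n})"
  then obtain T where A: "cube n - subcube n S (\<lambda>i. i \<in> T) \<subseteq> A" "A \<subset> cube n" by blast
  then obtain z where z: "z \<in> cube n" "z \<notin> A" by blast
  with A have "z \<in> subcube n S (\<lambda>i. i \<in> T)" by blast
  then have "subcube n S (\<lambda>i. z ! i) = subcube n S (\<lambda>i. i \<in> T)"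
    by (rule subcube_eq_if_mem)
  then have "\<forall>i\<in>S. pos_canal_var n (\<lambda>x. x \<in> A) i"
    using A z pos_canal_on_iff_zeros_in_subcube[of z n "\<lambda>x. x \<in> A" S] by auto
  then show "A \<in> {A. A \<subseteq> cube n \<and> (\<forall>i\<in>S. pos_canal_var n (\<lambda>x. x \<in> A) i)} - {cube n}"
    using A by auto
qed

lemma subcube_complement_determines_pattern:
  assumes "T \<subseteq> S" "T' \<subseteq> S" "A \<subset> cube n"
    and "cube n - subcube n S (\<lambda>i. i \<in> T) \<subseteq> A" "cube n - subcube n S (\<lambda>i. i \<in> T') \<subseteq> A"
  shows "T = T'"
proof -
  obtain z where "z \<in> cube n" "z \<notin> A" using assms(3) by blast
  with assms(4,5) have "z \<in> subcube n S (\<lambda>i. i \<in> T)" "z \<in> subcube n S (\<lambda>i. i \<in> T')"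
    by blast+
  with assms(1,2) show ?thesis by (auto simp: subcube_def)
qed

lemma Prb_pos_canal_on:
  assumes "S \<subseteq> {..<n}"
  shows "Prb p n {f \<in> boolfuns n. \<forall>i\<in>S. pos_canal_var n f i}
       = p ^ 2 ^ n + 2 ^ card S * (p ^ (2 ^ n - 2 ^ (n - card S)) - p ^ 2 ^ n)"
proof -
  let ?w = "bernoulli_weight p (cube n)"
  let ?G = "{A. A \<subseteq> cube n \<and> (\<forall>i\<in>S. pos_canal_var n (\<lambda>x. x \<in> A) i)}"
  let ?Up = "\<lambda>T. {A. cube n - subcube n S (\<lambda>i. i \<in> T) \<subseteq> A \<and> A \<subset> cube n}"
  have "finite S" using assms finite_subset by blast
  have finite_Up: "finite (?Up T)" for T
    by (rule finite_subset[of _ "Pow (cube n)"]) (auto simp: finite_cube)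
  have disjoint_Up: "?Up T \<inter> ?Up T' = {}" if "T \<in> Pow S" "T' \<in> Pow S" "T \<noteq> T'" for T T'
    using that subcube_complement_determines_pattern[of T S T' _ n] by blast
  have w_cube: "?w (cube n) = p ^ 2 ^ n"
    by (simp add: bernoulli_weight_def card_cube)
  have sum_Up: "sum ?w (?Up T) = p ^ (2 ^ n - 2 ^ (n - card S)) - p ^ 2 ^ n" for T
  proof -
    let ?D = "subcube n S (\<lambda>i. i \<in> T)"
    have "?D \<subseteq> cube n" by (auto simp: subcube_def)
    then have "card (cube n - ?D) = 2 ^ n - 2 ^ (n - card S)"
      by (simp add: card_Diff_subset finite_subset[OF _ finite_cube] card_cube card_subcube[OF assms])
    moreover have "?Up T = {A. cube n - ?D \<subseteq> A \<and> A \<subseteq> cube n} - {cube n}"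
      by auto
    ultimately show ?thesis
      using sum_bernoulli_weight_supersets[OF finite_cube, where T="cube n - ?D" and p=p]
      by (simp add: sum_diff1 w_cube finite_subset[of _ "Pow (cube n)"] finite_cube)
  qed
  have "Prb p n {f \<in> boolfuns n. \<forall>i\<in>S. pos_canal_var n f i} = sum ?w ?G"
    by (rule Prb_eq_sum_bernoulli_weight)
  also have "\<dots> = ?w (cube n) + sum ?w (?G - {cube n})"
    by (rule sum.remove) (auto simp: finite_subset[of _ "Pow (cube n)"] finite_cube pos_canal_var_def)
  also have "sum ?w (?G - {cube n}) = (\<Sum>T\<in>Pow S. sum ?w (?Up T))"
    unfolding pos_canal_on_sets_eq_UN
    by (rule sum.UNION_disjoint) (simp_all add: \<open>finite S\<close> finite_Up disjoint_Up)
  finally show ?thesis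
    using \<open>finite S\<close> by (simp add: w_cube sum_Up card_Pow)
qed

definition pos_canal_vars :: "nat \<Rightarrow> (bool list \<Rightarrow> bool) \<Rightarrow> nat set" where
  "pos_canal_vars n f = {i. i < n \<and> pos_canal_var n f i}"

lemma Prb_card_pos_canal_vars:
  "Prb p n {f \<in> boolfuns n. card (pos_canal_vars n f) = k}
     = (\<Sum>r=k..n. real (r choose k) * (-1) ^ (r - k) * real (n choose r) * 2 ^ r
                    * (p ^ (2 ^ n - 2 ^ (n - r)) - p ^ 2 ^ n))
       + (if n = k then p ^ 2 ^ n else 0)"
proof -
  define c where "c r = real (r choose k) * (-1) ^ (r - k)" for r
  define D where "D r = p ^ (2 ^ n - 2 ^ (n - r)) - p ^ 2 ^ n" for r
  have "Prb p n {f \<in> boolfuns n. card (pos_canal_vars n f) = k}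
      = (\<Sum>S\<in>Pow {..<n}. c (card S) * Prb p n {f \<in> boolfuns n. S \<subseteq> pos_canal_vars n f})"
    unfolding Prb_def c_def
    by (rule sum_card_eq_inclusion_exclusion) (auto simp: finite_boolfuns pos_canal_vars_def)
  also have "\<dots> = (\<Sum>S\<in>Pow {..<n}. c (card S) * (p ^ 2 ^ n + 2 ^ card S * D (card S)))"
  proof (rule sum.cong[OF refl])
    fix S assume "S \<in> Pow {..<n}"
    then have "{f \<in> boolfuns n. S \<subseteq> pos_canal_vars n f} = {f \<in> boolfuns n. \<forall>i\<in>S. pos_canal_var n f i}"
      by (auto simp: pos_canal_vars_def)
    with \<open>S \<in> Pow {..<n}\<close> show "c (card S) * Prb p n {f \<in> boolfuns n. S \<subseteq> pos_canal_vars n f}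
        = c (card S) * (p ^ 2 ^ n + 2 ^ card S * D (card S))"
      by (simp add: Prb_pos_canal_on D_def)
  qed
  also have "\<dots> = (\<Sum>r\<le>n. real (n choose r) * (c r * (p ^ 2 ^ n + 2 ^ r * D r)))"
    using sum_Pow_by_card[of "{..<n}" "\<lambda>r. c r * (p ^ 2 ^ n + 2 ^ r * D r)"] by simp
  also have "\<dots> = p ^ 2 ^ n * (\<Sum>r\<le>n. real (n choose r) * c r) + (\<Sum>r\<le>n. real (n choose r) * c r * 2 ^ r * D r)"
    by (simp add: sum.distrib sum_distrib_left algebra_simps)
  also have "(\<Sum>r\<le>n. real (n choose r) * c r) = (if n = k then 1 else 0)"
    unfolding c_def using sum_choose_choose_alternating[of n k] by (simp add: mult.assoc)
  also have "(\<Sum>r\<le>n. real (n choose r) * c r * 2 ^ r * D r) = (\<Sum>r=k..n. real (n choose r) * c r * 2 ^ r * D r)"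
    by (rule sum.mono_neutral_right) (auto simp: c_def)
  finally show ?thesis
    unfolding c_def D_def by (simp add: algebra_simps)
qed

definition literal :: "nat \<Rightarrow> nat \<Rightarrow> bool \<Rightarrow> bool list \<Rightarrow> bool" where
  "literal n i s = (\<lambda>x. x \<in> cube n \<and> x ! i = s)"

definition literals :: "nat \<Rightarrow> (bool list \<Rightarrow> bool) set" where
  "literals n = (\<lambda>(i, s). literal n i s) ` ({..<n} \<times> UNIV)"

lemma pos_canal_vars_literal:
  assumes "i < n"
  shows "pos_canal_vars n (literal n i s) = {i}"
proof -
  have "\<not> pos_canal_var n (literal n i s) j" if "j < n" "j \<noteq> i" for j
  proof
    assume "pos_canal_var n (literal n i s) j"
    then obtain t where t: "\<forall>x\<in>cube n. x ! j = t \<longrightarrow> literal n i s x"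
      unfolding pos_canal_var_def by blast
    have "(replicate n (\<not> s))[j := t] \<in> cube n"
      by (simp add: cube_def)
    with t that assms show False
      by (auto simp: literal_def)
  qed
  moreover have "pos_canal_var n (literal n i s) i"
    by (auto simp: pos_canal_var_def literal_def)
  ultimately show ?thesis
    using assms by (auto simp: pos_canal_vars_def)
qed

lemma literal_in_pos_neg_canal:
  assumes "i < n"
  shows "literal n i s \<in> {f \<in> boolfuns n. pos_canal n f \<and> neg_canal n f}"
proof -
  have "pos_canal_var n (literal n i s) i" "neg_canal_var n (literal n i s) i"
    by (auto simp: pos_canal_var_def neg_canal_var_def literal_def intro: exI[of _ "\<not> s"])
  with assms show ?thesis
    by (auto simp: boolfuns_def literal_def pos_canal_def neg_canal_def)
qed

lemma pos_neg_canal_imp_literal: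
  assumes "f \<in> boolfuns n" "pos_canal n f" "neg_canal n f"
  obtains i s where "i < n" "f = literal n i s"
proof -
  obtain i s where "i < n" and ones: "\<forall>x\<in>cube n. x ! i = s \<longrightarrow> f x"
    using assms(2) unfolding pos_canal_def pos_canal_var_def by blast
  obtain j t where "j < n" and zeros: "\<forall>x\<in>cube n. x ! j = t \<longrightarrow> \<not> f x"
    using assms(3) unfolding neg_canal_def neg_canal_var_def by blast
  have "j = i"
  proof (rule ccontr)
    assume "j \<noteq> i"
    have "(replicate n s)[j := t] \<in> cube n"
      by (simp add: cube_def)
    with ones zeros \<open>i < n\<close> \<open>j < n\<close> \<open>j \<noteq> i\<close> show False
      by auto
  qed
  have "t = (\<not> s)"
  proof (rule ccontr)
    assume "t \<noteq> (\<not> s)"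
    have "replicate n s \<in> cube n"
      by (simp add: cube_def)
    with ones zeros \<open>i < n\<close> \<open>j = i\<close> \<open>t \<noteq> (\<not> s)\<close> show False
      by auto
  qed
  have "f = literal n i s"
  proof
    fix x
    show "f x = literal n i s x"
      using assms(1) ones zeros \<open>j = i\<close> \<open>t = (\<not> s)\<close>
      by (cases "x \<in> cube n") (auto simp: literal_def boolfuns_def)
  qed
  with \<open>i < n\<close> show ?thesis by (rule that)
qed

lemma pos_neg_canal_eq_literals:
  "{f \<in> boolfuns n. pos_canal n f \<and> neg_canal n f} = literals n"
proof (intro equalityI subsetI)
  fix f assume "f \<in> {f \<in> boolfuns n. pos_canal n f \<and> neg_canal n f}"
  then obtain i s where "i < n" "f = literal n i s"
    by (auto elim: pos_neg_canal_imp_literal)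
  then show "f \<in> literals n"
    by (auto simp: literals_def)
qed (auto simp: literals_def dest: literal_in_pos_neg_canal)

lemma card_pos_canal_vars_literals:
  "f \<in> literals n \<Longrightarrow> card (pos_canal_vars n f) = 1"
  by (auto simp: literals_def pos_canal_vars_literal)

lemma Prb_literals:
  "Prb p n (literals n) = 2 * real n * (p ^ 2 ^ (n - 1) * (1 - p) ^ 2 ^ (n - 1))"
proof -
  have "inj_on (\<lambda>(i, s). literal n i s) ({..<n} \<times> UNIV)"
  proof (rule inj_onI, clarify)
    fix i j s t assume "i < n" "j < n" and eq: "literal n i s = literal n j t"
    then have "{i} = {j}"
      by (metis pos_canal_vars_literal)
    moreover have "replicate n s \<in> cube n"
      by (simp add: cube_def)
    ultimately show "i = j \<and> s = t"
      using eq \<open>i < n\<close> by (auto simp: literal_def fun_eq_iff)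
  qed
  then have "Prb p n (literals n) = (\<Sum>(i, s)\<in>{..<n} \<times> UNIV.
      p ^ card {x \<in> cube n. literal n i s x} * (1 - p) ^ card {x \<in> cube n. \<not> literal n i s x})"
    by (simp add: Prb_def literals_def sum.reindex case_prod_unfold)
  also have "\<dots> = (\<Sum>(i, s)\<in>{..<n} \<times> (UNIV :: bool set). p ^ 2 ^ (n - 1) * (1 - p) ^ 2 ^ (n - 1))"
  proof (rule sum.cong[OF refl], clarify)
    fix i s assume "i < n"
    moreover have "{x \<in> cube n. literal n i s x} = subcube n {i} (\<lambda>_. s)"
      and "{x \<in> cube n. \<not> literal n i s x} = subcube n {i} (\<lambda>_. \<not> s)"
      by (auto simp: literal_def subcube_def)
    ultimately show "p ^ card {x \<in> cube n. literal n i s x} * (1 - p) ^ card {x \<in> cube n. \<not> literal n i s x}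
        = p ^ 2 ^ (n - 1) * (1 - p) ^ 2 ^ (n - 1)"
      by (simp add: card_subcube)
  qed
  also have "\<dots> = 2 * real n * (p ^ 2 ^ (n - 1) * (1 - p) ^ 2 ^ (n - 1))"
    by (simp add: card_cartesian_product)
  finally show ?thesis .
qed

lemma PCE_eq_Diff_literals:
  assumes "1 \<le> k"
  shows "PCE n k = {f \<in> boolfuns n. card (pos_canal_vars n f) = k} - literals n"
proof -
  have "pos_canal n f" if "card (pos_canal_vars n f) = k" for f
  proof -
    from that assms obtain i where "i \<in> pos_canal_vars n f"
      by (metis card.empty ex_in_conv not_one_le_zero)
    then show ?thesis
      by (auto simp: pos_canal_vars_def pos_canal_def)
  qed
  then show ?thesis
    unfolding PCE_def pos_canal_vars_def[symmetric] pos_neg_canal_eq_literals[symmetric] by blast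
qed

lemma Prb_PCE_ge_2:
  assumes "2 \<le> k"
  shows "Prb p n (PCE n k)
     = (\<Sum>r=k..n. real (r choose k) * (-1) ^ (r - k) * real (n choose r) * 2 ^ r
                    * (p ^ (2 ^ n - 2 ^ (n - r)) - p ^ 2 ^ n))
       + (if n = k then p ^ 2 ^ n else 0)"
proof -
  have "PCE n k = {f \<in> boolfuns n. card (pos_canal_vars n f) = k}"
    using assms card_pos_canal_vars_literals by (auto simp: PCE_eq_Diff_literals)
  then show ?thesis
    by (simp add: Prb_card_pos_canal_vars)
qed

lemma Prb_PCE_1:
  assumes "1 < n"
  shows "Prb p n (PCE n 1)
     = 2 * real n * (p ^ 2 ^ (n - 1) - p ^ 2 ^ n - p ^ 2 ^ (n - 1) * (1 - p) ^ 2 ^ (n - 1))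
       + (\<Sum>r=2..n. real r * (-1) ^ (r - 1) * real (n choose r) * 2 ^ r * (p ^ (2 ^ n - 2 ^ (n - r)) - p ^ 2 ^ n))"
proof -
  have literals: "literals n \<subseteq> {f \<in> boolfuns n. card (pos_canal_vars n f) = 1}"
    using card_pos_canal_vars_literals pos_neg_canal_eq_literals by blast
  have "Prb p n (PCE n 1) = Prb p n {f \<in> boolfuns n. card (pos_canal_vars n f) = 1} - Prb p n (literals n)"
    unfolding Prb_def PCE_eq_Diff_literals[OF order_refl]
    by (rule sum_diff[OF _ literals]) (simp add: finite_boolfuns)
  also have "Prb p n {f \<in> boolfuns n. card (pos_canal_vars n f) = 1}
      = real n * 2 * (p ^ (2 ^ n - 2 ^ (n - 1)) - p ^ 2 ^ n)
        + (\<Sum>r=2..n. real r * (-1) ^ (r - 1) * real (n choose r) * 2 ^ r * (p ^ (2 ^ n - 2 ^ (n - r)) - p ^ 2 ^ n))"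
    using assms by (simp add: Prb_card_pos_canal_vars sum.atLeast_Suc_atMost numeral_2_eq_2)
  also have "(2::nat) ^ n - 2 ^ (n - 1) = 2 ^ (n - 1)"
    using assms by (cases n) simp_all
  finally show ?thesis
    by (simp add: Prb_literals algebra_simps)
qed

definition compl_boolfun :: "nat \<Rightarrow> (bool list \<Rightarrow> bool) \<Rightarrow> bool list \<Rightarrow> bool" where
  "compl_boolfun n f = (\<lambda>x. x \<in> cube n \<and> \<not> f x)"

lemma compl_boolfun_in_boolfuns: "compl_boolfun n f \<in> boolfuns n"
  by (simp add: compl_boolfun_def boolfuns_def)

lemma compl_boolfun_PCE_iff:
  "f \<in> boolfuns n \<Longrightarrow> compl_boolfun n f \<in> PCE n k \<longleftrightarrow> f \<in> NCE n k"
  by (simp add: PCE_def NCE_def pos_canal_def neg_canal_def pos_canal_var_def neg_canal_var_def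
      compl_boolfun_def boolfuns_def)

lemma Prb_NCE_eq_Prb_PCE:
  "Prb p n (NCE n k) = Prb (1 - p) n (PCE n k)"
proof -
  have involution: "compl_boolfun n (compl_boolfun n f) = f" if "f \<in> boolfuns n" for f
    using that by (auto simp: compl_boolfun_def boolfuns_def)
  have "PCE n k = compl_boolfun n ` NCE n k"
  proof (intro equalityI subsetI)
    fix f assume f: "f \<in> PCE n k"
    then have "f \<in> boolfuns n" by (simp add: PCE_def)
    with f have "compl_boolfun n f \<in> NCE n k"
      using compl_boolfun_PCE_iff[OF compl_boolfun_in_boolfuns, of n f k] involution by simp
    with involution[OF \<open>f \<in> boolfuns n\<close>] show "f \<in> compl_boolfun n ` NCE n k"
      by (metis image_eqI)
  qed (auto simp: compl_boolfun_PCE_iff NCE_def)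
  moreover have "inj_on (compl_boolfun n) (NCE n k)"
    by (rule inj_on_inverseI[where g="compl_boolfun n"]) (simp add: involution NCE_def)
  moreover have "(1 - p) ^ card {x \<in> cube n. compl_boolfun n f x} * (1 - (1 - p)) ^ card {x \<in> cube n. \<not> compl_boolfun n f x}
      = p ^ card {x \<in> cube n. f x} * (1 - p) ^ card {x \<in> cube n. \<not> f x}" for f
  proof -
    have "{x \<in> cube n. compl_boolfun n f x} = {x \<in> cube n. \<not> f x}"
      "{x \<in> cube n. \<not> compl_boolfun n f x} = {x \<in> cube n. f x}"
      by (auto simp: compl_boolfun_def)
    then show ?thesis by simp
  qed
  ultimately show ?thesis
    unfolding Prb_def by (intro sum.reindex_cong[symmetric])
qed

theorem mainTheorem7:
  fixes n :: nat and p :: real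
  assumes "n \<ge> 1" and "0 \<le> p" and "p \<le> 1"
  shows
   "(\<forall>k. 1 < k \<and> k < n \<longrightarrow>
       Prb p n (PCE n k) = (\<Sum>r=k..n. real (r choose k) * (-1) ^ (r - k) * real (n choose r) * 2 ^ r
                             * (p ^ (2 ^ n - 2 ^ (n - r)) - p ^ (2 ^ n)))
     \<and> Prb p n (NCE n k) = (\<Sum>r=k..n. real (r choose k) * (-1) ^ (r - k) * real (n choose r) * 2 ^ r
                             * ((1 - p) ^ (2 ^ n - 2 ^ (n - r)) - (1 - p) ^ (2 ^ n))))
    \<and> (n > 1 \<longrightarrow>
       Prb p n (PCE n n) = 2 ^ n * (p ^ (2 ^ n - 1) - p ^ (2 ^ n)) + p ^ (2 ^ n)
     \<and> Prb p n (NCE n n) = 2 ^ n * ((1 - p) ^ (2 ^ n - 1) - (1 - p) ^ (2 ^ n)) + (1 - p) ^ (2 ^ n))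
    \<and> (1 < n \<longrightarrow>
       Prb p n (PCE n 1) = 2 * real n * (p ^ (2 ^ (n - 1)) - p ^ (2 ^ n) - p ^ (2 ^ (n - 1)) * (1 - p) ^ (2 ^ (n - 1)))
          + (\<Sum>r=2..n. real r * (-1) ^ (r - 1) * real (n choose r) * 2 ^ r * (p ^ (2 ^ n - 2 ^ (n - r)) - p ^ (2 ^ n)))
     \<and> Prb p n (NCE n 1) = 2 * real n * ((1 - p) ^ (2 ^ (n - 1)) - (1 - p) ^ (2 ^ n) - p ^ (2 ^ (n - 1)) * (1 - p) ^ (2 ^ (n - 1)))
          + (\<Sum>r=2..n. real r * (-1) ^ (r - 1) * real (n choose r) * 2 ^ r * ((1 - p) ^ (2 ^ n - 2 ^ (n - r)) - (1 - p) ^ (2 ^ n))))"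
  \<comment> \<open>The identities are polynomial in p.\<close>
  using Prb_PCE_ge_2[of _ p n] Prb_PCE_ge_2[of _ "1 - p" n] Prb_PCE_1[of n p] Prb_PCE_1[of n "1 - p"]
  by (simp add: Prb_NCE_eq_Prb_PCE mult.commute)

end
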